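(* As $n\to\infty$, the ratio $|E(G_n)|/|E(SG(n,2))|$ tends to $2/3$.
   Context: Let $[n]=\{1,\dots,n\}$. A $2$-subset $\{a,b\}$ of $[n]$ with $a<b$ is called stable if $b \neq a+1$ and $\{a,b\}\neq\{1,n\}$; it is written $ab$. The Schrijver graph $SG(n,2)$ has as vertices all stable $2$-subsets of $[n]$, two being adjacent iff they are disjoint. For $n\ge 4$, the graph $G_n$ has the same vertex set; two vertices $ab$ ($a<b$) and $cd$ ($c<d$) with $a<c$ are adjacent in $G_n$ if and only if $\{a,b\}\cap\{c,d\}=\emptyset$ and either $a<c<b<d$, or $1<a<c<d<b$. *)

theory Defs
  imports Complex_Main
begin

definition stable_vertices :: "nat \<Rightarrow> (nat \<times> nat) set" where
  "stable_vertices n = {(a,b). 1 \<le> a \<and> a < b \<and> b \<le> n \<and> b \<noteq> a + 1 \<and> \<not> (a = 1 \<and> b = n)}"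

definition SG_adj :: "nat \<times> nat \<Rightarrow> nat \<times> nat \<Rightarrow> bool" where
  "SG_adj u v = ({fst u, snd u} \<inter> {fst v, snd v} = {})"

definition G_adj_ord :: "nat \<times> nat \<Rightarrow> nat \<times> nat \<Rightarrow> bool" where
  "G_adj_ord u v = (case u of (a,b) \<Rightarrow> case v of (c,d) \<Rightarrow>
      a < c \<and> {a,b} \<inter> {c,d} = {} \<and> ((a < c \<and> c < b \<and> b < d) \<or> (1 < a \<and> a < c \<and> c < d \<and> d < b)))"

definition G_adj :: "nat \<times> nat \<Rightarrow> nat \<times> nat \<Rightarrow> bool" where
  "G_adj u v = (G_adj_ord u v \<or> G_adj_ord v u)"

definition edges_of :: "(nat \<times> nat \<Rightarrow> nat \<times> nat \<Rightarrow> bool) \<Rightarrow> nat \<Rightarrow> (nat \<times> nat) set set" where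
  "edges_of adj n = {{u, v} | u v. u \<in> stable_vertices n \<and> v \<in> stable_vertices n \<and> u \<noteq> v \<and> adj u v}"

end

theory Submission
  imports Defs "HOL-Real_Asymp.Real_Asymp"
begin

(* Count each edge of SG(n,2) as the ordered pair ab, cd with a < c. The four points of two disjoint
   pairs, sorted as p < q < r < s, are split in one of three ways: separated {p,q},{r,s}, crossing
   {p,r},{q,s} or nested {p,s},{q,r}. Thus every 4-subset of [n] yields at most three edges of
   SG(n,2), and all three when its points are pairwise non-consecutive and avoid 1; the edges
   of G_n are the crossing edges of SG(n,2) together with its nested edges having p > 1. Hence
   3 C(n-4,4) <= |E(SG(n,2))| <= 3 C(n,4) and 2 C(n-4,4) <= |E(G_n)| <= 2 C(n,4), and the ratio
   tends to 2/3 because C(n-4,4) / C(n,4) tends to 1. *)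

definition quadruples :: "nat \<Rightarrow> (nat \<times> nat \<times> nat \<times> nat) set" where
  "quadruples n = {(a,b,c,d). 1 \<le> a \<and> a < b \<and> b < c \<and> c < d \<and> d \<le> n}"

lemma finite_quadruples: "finite (quadruples n)"
  by (rule finite_subset[of _ "{..n} \<times> {..n} \<times> {..n} \<times> {..n}"]) (auto simp: quadruples_def)

lemma card_quadruples: "card (quadruples n) = n choose 4"
proof -
  have "bij_betw (\<lambda>(a,b,c,d). {a,b,c,d}) (quadruples n) {A. A \<subseteq> {1..n} \<and> card A = 4}"
  proof (rule bij_betw_imageI)
    show "inj_on (\<lambda>(a,b,c,d). {a,b,c,d}) (quadruples n)"
    proof (rule inj_onI)
      fix x y assume x: "x \<in> quadruples n" and y: "y \<in> quadruples n"
        and eq: "(\<lambda>(a,b,c,d). {a,b,c,d}) x = (\<lambda>(a,b,c,d). {a,b,c,d}) y"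
      obtain a b c d a' b' c' d' where "x = (a,b,c,d)" "y = (a',b',c',d')"
        by (cases x, cases y) blast
      with x y eq have "[a,b,c,d] = [a',b',c',d']"
        by (intro strict_sorted_equal) (auto simp: quadruples_def)
      with \<open>x = (a,b,c,d)\<close> \<open>y = (a',b',c',d')\<close> show "x = y" by simp
    qed
    show "(\<lambda>(a,b,c,d). {a,b,c,d}) ` quadruples n = {A. A \<subseteq> {1..n} \<and> card A = 4}"
    proof (intro equalityI subsetI)
      fix A assume "A \<in> {A. A \<subseteq> {1..n} \<and> card A = 4}"
      then have A: "A \<subseteq> {1..n}" "card A = 4" by auto
      then obtain xs where xs: "sorted_wrt (<) xs" "set xs = A" "length xs = 4"
        by (metis finite_subset finite_atLeastAtMost sorted_list_of_set.finite_set_strict_sorted)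
      then obtain a b c d where "xs = [a,b,c,d]"
        by (auto simp: numeral_eq_Suc length_Suc_conv)
      with xs have "a < b" "b < c" "c < d" "A = {a,b,c,d}" by auto
      with A(1) have "(a,b,c,d) \<in> quadruples n" by (auto simp: quadruples_def)
      with \<open>A = {a,b,c,d}\<close> show "A \<in> (\<lambda>(a,b,c,d). {a,b,c,d}) ` quadruples n"
        by (auto intro: rev_image_eqI)
    qed (auto simp: quadruples_def card_insert_if)
  qed
  then show ?thesis
    using n_subsets[of "{1..n}" 4] by (simp add: bij_betw_same_card)
qed

lemma real_choose_4: "real (n choose 4) = real n * (real n - 1) * (real n - 2) * (real n - 3) / 24"
  by (simp add: binomial_gbinomial gbinomial_altdef_of_nat numeral_eq_Suc atLeast0_lessThan_Suc)

definition spread_quadruples :: "nat \<Rightarrow> (nat \<times> nat \<times> nat \<times> nat) set" where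
  "spread_quadruples n = {(a,b,c,d). 1 < a \<and> a + 1 < b \<and> b + 1 < c \<and> c + 1 < d \<and> d \<le> n}"

lemma card_spread_quadruples: "card (spread_quadruples n) = (n - 4) choose 4"
proof -
  have "bij_betw (\<lambda>(a,b,c,d). (a+1, b+2, c+3, d+4)) (quadruples (n - 4)) (spread_quadruples n)"
    by (rule bij_betw_byWitness[where f' = "\<lambda>(a,b,c,d). (a-1, b-2, c-3, d-4)"])
      (auto simp: quadruples_def spread_quadruples_def)
  then show ?thesis
    using card_quadruples[of "n - 4"] by (simp add: bij_betw_same_card)
qed

lemma spread_quadruples_subset: "spread_quadruples n \<subseteq> quadruples n"
  by (auto simp: spread_quadruples_def quadruples_def)

definition separated_pair :: "nat \<times> nat \<times> nat \<times> nat \<Rightarrow> (nat \<times> nat) \<times> (nat \<times> nat)" where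
  "separated_pair = (\<lambda>(a,b,c,d). ((a,b),(c,d)))"

definition crossing_pair :: "nat \<times> nat \<times> nat \<times> nat \<Rightarrow> (nat \<times> nat) \<times> (nat \<times> nat)" where
  "crossing_pair = (\<lambda>(a,b,c,d). ((a,c),(b,d)))"

definition nested_pair :: "nat \<times> nat \<times> nat \<times> nat \<Rightarrow> (nat \<times> nat) \<times> (nat \<times> nat)" where
  "nested_pair = (\<lambda>(a,b,c,d). ((a,d),(b,c)))"

lemma pairings_distinct:
  assumes "q \<in> quadruples n" "q' \<in> quadruples n"
  shows "separated_pair q \<noteq> crossing_pair q'" "separated_pair q \<noteq> nested_pair q'"
    and "crossing_pair q \<noteq> nested_pair q'"
  using assms by (auto simp: quadruples_def separated_pair_def crossing_pair_def nested_pair_def)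

lemma card_pairings:
  assumes "Q \<subseteq> quadruples n"
  shows "card (crossing_pair ` Q \<union> nested_pair ` Q) = 2 * card Q"
    and "card (separated_pair ` Q \<union> crossing_pair ` Q \<union> nested_pair ` Q) = 3 * card Q"
proof -
  have "finite Q"
    using assms finite_quadruples by (rule finite_subset)
  have inj: "inj separated_pair" "inj crossing_pair" "inj nested_pair"
    by (auto simp: inj_def separated_pair_def crossing_pair_def nested_pair_def)
  have "separated_pair q \<noteq> crossing_pair q'" "separated_pair q \<noteq> nested_pair q'"
    "crossing_pair q \<noteq> nested_pair q'" if "q \<in> Q" "q' \<in> Q" for q q'
    using pairings_distinct that assms by (meson subsetD)+
  then have disjoint: "crossing_pair ` Q \<inter> nested_pair ` Q = {}"
    "(separated_pair ` Q \<union> crossing_pair ` Q) \<inter> nested_pair ` Q = {}"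
    "separated_pair ` Q \<inter> crossing_pair ` Q = {}"
    by blast+
  show "card (crossing_pair ` Q \<union> nested_pair ` Q) = 2 * card Q"
    and "card (separated_pair ` Q \<union> crossing_pair ` Q \<union> nested_pair ` Q) = 3 * card Q"
    using \<open>finite Q\<close> inj disjoint by (simp_all add: card_Un_disjoint card_image inj_on_subset)
qed

definition ordered_edges ::
    "(nat \<times> nat \<Rightarrow> nat \<times> nat \<Rightarrow> bool) \<Rightarrow> nat \<Rightarrow> ((nat \<times> nat) \<times> (nat \<times> nat)) set" where
  "ordered_edges adj n =
     {(u,v). u \<in> stable_vertices n \<and> v \<in> stable_vertices n \<and> fst u < fst v \<and> adj u v}"

lemma card_edges_of_eq_card_ordered_edges:
  assumes sym: "\<And>u v. adj u v \<Longrightarrow> adj v u" and fst_neq: "\<And>u v. adj u v \<Longrightarrow> fst u \<noteq> fst v"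
  shows "card (edges_of adj n) = card (ordered_edges adj n)"
proof -
  have "edges_of adj n = (\<lambda>(u,v). {u,v}) ` ordered_edges adj n"
  proof (intro equalityI subsetI)
    fix e assume "e \<in> edges_of adj n"
    then obtain u v where e: "e = {u,v}" "u \<in> stable_vertices n" "v \<in> stable_vertices n" "adj u v"
      by (auto simp: edges_of_def)
    then have "(u,v) \<in> ordered_edges adj n \<or> (v,u) \<in> ordered_edges adj n"
      using sym[OF e(4)] fst_neq[OF e(4)] by (auto simp: ordered_edges_def)
    then show "e \<in> (\<lambda>(u,v). {u,v}) ` ordered_edges adj n"
      using e by (auto intro: rev_image_eqI)
  qed (auto simp: edges_of_def ordered_edges_def)
  moreover have "inj_on (\<lambda>(u,v). {u,v}) (ordered_edges adj n)"
    by (auto simp: inj_on_def ordered_edges_def doubleton_eq_iff)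
  ultimately show ?thesis
    by (simp add: card_image)
qed

lemma spread_pairings_subset_ordered_SG_edges:
  "separated_pair ` spread_quadruples n \<union> crossing_pair ` spread_quadruples n
     \<union> nested_pair ` spread_quadruples n \<subseteq> ordered_edges SG_adj n"
  by (auto simp: spread_quadruples_def ordered_edges_def stable_vertices_def SG_adj_def
      separated_pair_def crossing_pair_def nested_pair_def)

lemma spread_pairings_subset_ordered_G_edges:
  "crossing_pair ` spread_quadruples n \<union> nested_pair ` spread_quadruples n \<subseteq> ordered_edges G_adj n"
  by (auto simp: spread_quadruples_def ordered_edges_def stable_vertices_def
      G_adj_def G_adj_ord_def crossing_pair_def nested_pair_def)

lemma ordered_SG_edges_subset_pairings:
  "ordered_edges SG_adj n \<subseteq>
     separated_pair ` quadruples n \<union> crossing_pair ` quadruples n \<union> nested_pair ` quadruples n"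
proof
  fix e assume "e \<in> ordered_edges SG_adj n"
  then obtain a b c d where e: "e = ((a,b),(c,d))"
    and "1 \<le> a" "a < b" "a < c" "c < d" "b \<le> n" "d \<le> n" "b \<noteq> c" "b \<noteq> d"
    by (auto simp: ordered_edges_def stable_vertices_def SG_adj_def)
  then consider "(a,b,c,d) \<in> quadruples n" "e = separated_pair (a,b,c,d)"
    | "(a,c,b,d) \<in> quadruples n" "e = crossing_pair (a,c,b,d)"
    | "(a,c,d,b) \<in> quadruples n" "e = nested_pair (a,c,d,b)"
    by (cases b c rule: linorder_cases; cases b d rule: linorder_cases)
      (auto simp: quadruples_def separated_pair_def crossing_pair_def nested_pair_def)
  then show "e \<in> separated_pair ` quadruples n \<union> crossing_pair ` quadruples n \<union> nested_pair ` quadruples n"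
    by cases blast+
qed

lemma ordered_G_edges_subset_ordered_SG_edges: "ordered_edges G_adj n \<subseteq> ordered_edges SG_adj n"
  by (auto simp: ordered_edges_def G_adj_def G_adj_ord_def SG_adj_def)

lemma ordered_G_edges_disjoint_separated_pairs:
  "ordered_edges G_adj n \<inter> separated_pair ` quadruples n = {}"
  by (auto simp: ordered_edges_def G_adj_def G_adj_ord_def quadruples_def separated_pair_def)

lemma card_SG_edges_bounds:
  "3 * ((n - 4) choose 4) \<le> card (edges_of SG_adj n)" "card (edges_of SG_adj n) \<le> 3 * (n choose 4)"
proof -
  let ?Pairs = "\<lambda>Q. separated_pair ` Q \<union> crossing_pair ` Q \<union> nested_pair ` Q"
  have card_eq: "card (edges_of SG_adj n) = card (ordered_edges SG_adj n)"
    by (rule card_edges_of_eq_card_ordered_edges) (auto simp: SG_adj_def)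
  have "finite (?Pairs (quadruples n))"
    by (simp add: finite_quadruples)
  then have "finite (ordered_edges SG_adj n)"
    using ordered_SG_edges_subset_pairings by (rule finite_subset[rotated])
  have "3 * ((n - 4) choose 4) = card (?Pairs (spread_quadruples n))"
    using card_pairings(2)[OF spread_quadruples_subset] by (simp add: card_spread_quadruples)
  also have "\<dots> \<le> card (ordered_edges SG_adj n)"
    using \<open>finite (ordered_edges SG_adj n)\<close> spread_pairings_subset_ordered_SG_edges by (rule card_mono)
  finally show "3 * ((n - 4) choose 4) \<le> card (edges_of SG_adj n)"
    unfolding card_eq .
  have "card (ordered_edges SG_adj n) \<le> card (?Pairs (quadruples n))"
    using \<open>finite (?Pairs (quadruples n))\<close> ordered_SG_edges_subset_pairings by (rule card_mono)
  also have "\<dots> = 3 * (n choose 4)"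
    using card_pairings(2)[OF subset_refl] by (simp add: card_quadruples)
  finally show "card (edges_of SG_adj n) \<le> 3 * (n choose 4)"
    unfolding card_eq .
qed

lemma card_G_edges_bounds:
  "2 * ((n - 4) choose 4) \<le> card (edges_of G_adj n)" "card (edges_of G_adj n) \<le> 2 * (n choose 4)"
proof -
  let ?Pairs = "\<lambda>Q. crossing_pair ` Q \<union> nested_pair ` Q"
  have card_eq: "card (edges_of G_adj n) = card (ordered_edges G_adj n)"
    by (rule card_edges_of_eq_card_ordered_edges) (auto simp: G_adj_def G_adj_ord_def split: prod.splits)
  have upper: "ordered_edges G_adj n \<subseteq> ?Pairs (quadruples n)"
    using ordered_SG_edges_subset_pairings ordered_G_edges_subset_ordered_SG_edges
      ordered_G_edges_disjoint_separated_pairs by blast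
  have "finite (?Pairs (quadruples n))"
    by (simp add: finite_quadruples)
  then have "finite (ordered_edges G_adj n)"
    using upper by (rule finite_subset[rotated])
  have "2 * ((n - 4) choose 4) = card (?Pairs (spread_quadruples n))"
    using card_pairings(1)[OF spread_quadruples_subset] by (simp add: card_spread_quadruples)
  also have "\<dots> \<le> card (ordered_edges G_adj n)"
    using \<open>finite (ordered_edges G_adj n)\<close> spread_pairings_subset_ordered_G_edges by (rule card_mono)
  finally show "2 * ((n - 4) choose 4) \<le> card (edges_of G_adj n)"
    unfolding card_eq .
  have "card (ordered_edges G_adj n) \<le> card (?Pairs (quadruples n))"
    using \<open>finite (?Pairs (quadruples n))\<close> upper by (rule card_mono)
  also have "\<dots> = 2 * (n choose 4)"
    using card_pairings(1)[OF subset_refl] by (simp add: card_quadruples)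
  finally show "card (edges_of G_adj n) \<le> 2 * (n choose 4)"
    unfolding card_eq .
qed

lemma ratio_between:
  fixes g s l h :: real
  assumes "0 < l" "2 * l \<le> g" "g \<le> 2 * h" "3 * l \<le> s" "s \<le> 3 * h"
  shows "2/3 * (l / h) \<le> g / s" "g / s \<le> 2/3 / (l / h)"
proof -
  have "0 < h" "0 < s"
    using assms by linarith+
  have "2 * l * s \<le> 2 * l * (3 * h)"
    using assms by (intro mult_left_mono) simp_all
  also have "\<dots> \<le> g * (3 * h)"
    using assms \<open>0 < h\<close> by (intro mult_right_mono) simp_all
  finally show "2/3 * (l / h) \<le> g / s"
    using \<open>0 < h\<close> \<open>0 < s\<close> by (simp add: field_simps)
  have "g * (3 * l) \<le> 2 * h * (3 * l)"
    using assms by (intro mult_right_mono) simp_all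
  also have "\<dots> \<le> 2 * h * s"
    using assms \<open>0 < h\<close> by (intro mult_left_mono) simp_all
  finally show "g / s \<le> 2/3 / (l / h)"
    using assms(1) \<open>0 < h\<close> \<open>0 < s\<close> by (simp add: field_simps)
qed

lemma choose_4_shift_ratio: "(\<lambda>n. real ((n - 4) choose 4) / real (n choose 4)) \<longlonglongrightarrow> 1"
proof (rule Lim_transform_eventually)
  let ?p = "\<lambda>x::real. x * (x - 1) * (x - 2) * (x - 3)"
  show "(\<lambda>n. ?p (real n - 4) / ?p (real n)) \<longlonglongrightarrow> 1"
    by real_asymp
  show "\<forall>\<^sub>F n in sequentially.
          ?p (real n - 4) / ?p (real n) = real ((n - 4) choose 4) / real (n choose 4)"
    using eventually_ge_at_top[of 4] by eventually_elim (simp add: real_choose_4 of_nat_diff)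
qed

theorem proposition2:
  shows "(\<lambda>n. real (card (edges_of G_adj n)) / real (card (edges_of SG_adj n)))
           \<longlonglongrightarrow> 2 / 3"
proof -
  let ?ratio = "\<lambda>n. real (card (edges_of G_adj n)) / real (card (edges_of SG_adj n))"
  define \<rho> where "\<rho> n = real ((n - 4) choose 4) / real (n choose 4)" for n
  have "\<rho> \<longlonglongrightarrow> 1"
    unfolding \<rho>_def by (rule choose_4_shift_ratio)
  then have lower: "(\<lambda>n. 2/3 * \<rho> n) \<longlonglongrightarrow> 2/3" and upper: "(\<lambda>n. 2/3 / \<rho> n) \<longlonglongrightarrow> 2/3"
    by (auto intro!: tendsto_eq_intros)
  have "\<forall>\<^sub>F n in sequentially. 2/3 * \<rho> n \<le> ?ratio n \<and> ?ratio n \<le> 2/3 / \<rho> n"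
    using eventually_ge_at_top[of 8]
  proof eventually_elim
    case (elim n)
    then have "0 < real ((n - 4) choose 4)"
      by simp
    moreover have "2 * real ((n - 4) choose 4) \<le> real (card (edges_of G_adj n))"
      "real (card (edges_of G_adj n)) \<le> 2 * real (n choose 4)"
      "3 * real ((n - 4) choose 4) \<le> real (card (edges_of SG_adj n))"
      "real (card (edges_of SG_adj n)) \<le> 3 * real (n choose 4)"
      using card_G_edges_bounds[of n] card_SG_edges_bounds[of n] by (simp_all flip: of_nat_le_iff)
    ultimately show ?case
      unfolding \<rho>_def by (blast intro: ratio_between)
  qed
  then have "\<forall>\<^sub>F n in sequentially. 2/3 * \<rho> n \<le> ?ratio n"
    and "\<forall>\<^sub>F n in sequentially. ?ratio n \<le> 2/3 / \<rho> n"
    by (simp_all add: eventually_conj_iff)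
  from tendsto_sandwich[OF this lower upper] show ?thesis .
qed

end
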